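(* Let $X$ be a scattered topological space such that $\mathrm{Homeo}(X)$ is fully transitive. Then the topological group $\mathrm{Homeo}(X)$ is amenable and Roelcke-precompact.
   Context: A topological space (not assumed Hausdorff) is scattered if every nonempty subset has a point that is isolated in that subset. For scattered $X$, $\mathrm{Homeo}(X)$ is endowed with the topology of pointwise convergence on $X$, making it a Hausdorff topological group. Two points $x,y\in X$ are similar if there are neighbourhoods $U_x\ni x$, $U_y\ni y$ and a homeomorphism $h\colon U_x\to U_y$ with $h(x)=y$. $\mathrm{Homeo}(X)$ is fully transitive if for every $k$ and all $k$-tuples $(x_1,\dots,x_k)$, $(y_1,\dots,y_k)$ of pairwise distinct points with $x_i$ similar to $y_i$ for each $i$, some homeomorphism $g$ satisfies $g(x_i)=y_i$ for all $i$. Amenable: every continuous affine action on a nonempty compact convex set has a fixed point. Roelcke-precompact: for every identity neighbourhood $U$ there is a finite $F$ with $G=UFU$. *)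

theory Defs
  imports "HOL-Analysis.Analysis"
begin

definition scattered_space :: "'a topology \<Rightarrow> bool" where
  "scattered_space X \<longleftrightarrow>
     (\<forall>S. S \<subseteq> topspace X \<and> S \<noteq> {} \<longrightarrow>
        (\<exists>x\<in>S. \<exists>U. openin X U \<and> U \<inter> S = {x}))"

definition Homeo :: "'a topology \<Rightarrow> ('a \<Rightarrow> 'a) set" where
  "Homeo X = {h. homeomorphic_map X X h \<and> (\<forall>x. x \<notin> topspace X \<longrightarrow> h x = x)}"

definition pointwise_topology :: "'a topology \<Rightarrow> ('a \<Rightarrow> 'a) topology" where
  "pointwise_topology X =
     topology_generated_by
       (insert (Homeo X) {{h \<in> Homeo X. h x \<in> U} | x U. x \<in> topspace X \<and> openin X U})"

definition neighbourhood_of :: "'a topology \<Rightarrow> 'a set \<Rightarrow> 'a \<Rightarrow> bool" where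
  "neighbourhood_of X N x \<longleftrightarrow> N \<subseteq> topspace X \<and> (\<exists>V. openin X V \<and> x \<in> V \<and> V \<subseteq> N)"

definition similar_points :: "'a topology \<Rightarrow> 'a \<Rightarrow> 'a \<Rightarrow> bool" where
  "similar_points X x y \<longleftrightarrow>
     (\<exists>Ux Uy h. neighbourhood_of X Ux x \<and> neighbourhood_of X Uy y \<and>
        homeomorphic_map (subtopology X Ux) (subtopology X Uy) h \<and> h x = y)"

definition fully_transitive :: "'a topology \<Rightarrow> bool" where
  "fully_transitive X \<longleftrightarrow>
     (\<forall>xs ys. length xs = length ys \<and> distinct xs \<and> distinct ys \<and>
        set xs \<subseteq> topspace X \<and> set ys \<subseteq> topspace X \<and>
        (\<forall>i<length xs. similar_points X (xs ! i) (ys ! i)) \<longrightarrow>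
        (\<exists>g\<in>Homeo X. \<forall>i<length xs. g (xs ! i) = ys ! i))"

text \<open>A topological group is given by a topology TG (carrier = topspace TG),
  multiplication m and unit e.\<close>

definition locally_convex_tvs :: "'v::real_vector topology \<Rightarrow> bool" where
  "locally_convex_tvs V \<longleftrightarrow>
     topspace V = UNIV \<and> Hausdorff_space V \<and>
     continuous_map (prod_topology V V) V (\<lambda>(x, y). x + y) \<and>
     continuous_map (prod_topology euclideanreal V) V (\<lambda>(a, x). a *\<^sub>R x) \<and>
     (\<forall>x U. openin V U \<and> x \<in> U \<longrightarrow> (\<exists>W. openin V W \<and> convex W \<and> x \<in> W \<and> W \<subseteq> U))"

definition continuous_affine_action ::
  "'g topology \<Rightarrow> ('g \<Rightarrow> 'g \<Rightarrow> 'g) \<Rightarrow> 'g \<Rightarrow> 'v::real_vector topology \<Rightarrow> 'v set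
     \<Rightarrow> ('g \<Rightarrow> 'v \<Rightarrow> 'v) \<Rightarrow> bool" where
  "continuous_affine_action TG m e V K act \<longleftrightarrow>
     (\<forall>g\<in>topspace TG. \<forall>x\<in>K. act g x \<in> K) \<and>
     (\<forall>x\<in>K. act e x = x) \<and>
     (\<forall>g\<in>topspace TG. \<forall>h\<in>topspace TG. \<forall>x\<in>K. act (m g h) x = act g (act h x)) \<and>
     (\<forall>g\<in>topspace TG. \<forall>x\<in>K. \<forall>y\<in>K. \<forall>t::real. 0 \<le> t \<and> t \<le> 1 \<longrightarrow>
        act g (t *\<^sub>R x + (1 - t) *\<^sub>R y) = t *\<^sub>R act g x + (1 - t) *\<^sub>R act g y) \<and>
     continuous_map (prod_topology TG (subtopology V K)) (subtopology V K) (\<lambda>(g, x). act g x)"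

text \<open>Amenability with respect to all locally convex spaces whose underlying vector
  space is the type 'v; the theorem quantifies over all such types 'v.\<close>
definition amenable_wrt ::
  "'g topology \<Rightarrow> ('g \<Rightarrow> 'g \<Rightarrow> 'g) \<Rightarrow> 'g \<Rightarrow> 'v::real_vector itself \<Rightarrow> bool" where
  "amenable_wrt TG m e (_::'v itself) \<longleftrightarrow>
     (\<forall>(V::'v topology) K act.
        locally_convex_tvs V \<and> K \<noteq> {} \<and> compactin V K \<and> convex K \<and>
        continuous_affine_action TG m e V K act \<longrightarrow>
        (\<exists>x\<in>K. \<forall>g\<in>topspace TG. act g x = x))"

definition roelcke_precompact ::
  "'g topology \<Rightarrow> ('g \<Rightarrow> 'g \<Rightarrow> 'g) \<Rightarrow> 'g \<Rightarrow> bool" where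
  "roelcke_precompact TG m e \<longleftrightarrow>
     (\<forall>U. openin TG U \<and> e \<in> U \<longrightarrow>
        (\<exists>F. finite F \<and> F \<subseteq> topspace TG \<and>
           topspace TG = {m (m u f) u' | u f u'. u \<in> U \<and> f \<in> F \<and> u' \<in> U}))"

end

(* Full transitivity says that every injection between finite subsets of X which maps each
   point into its Homeo(X)-orbit extends to a homeomorphism, and every identity neighbourhood of
   the pointwise topology contains the pointwise stabiliser Stab(A) of a finite set A.

   Roelcke precompactness: if f and g induce the same partial map of A into itself, then g lies
   in Stab(A) f Stab(A), and there are only finitely many such partial maps.

   Amenability: given finitely many homeomorphisms E and a finite set A, let B be A together with
   its preimages under E, and choose homeomorphisms r s realising the finitely many
   orbit-preserving permutations s of B. Every g in E permutes this family modulo Stab(A):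
   g (r s) lies in Stab(A) (r (p s)) for an orbit-preserving permutation p agreeing with g on
   the preimage of A. So for k in the compact convex set K, the barycentre of the points (r s) k
   is moved by g only by an average of displacements under Stab(A), which are uniformly small
   once A is large enough. Compactness turns these approximate fixed points into a fixed point. *)

theory Submission
  imports Defs
begin

section \<open>Orbit-preserving permutations of a finite set\<close>

definition class_permutations :: "('a \<Rightarrow> 'a \<Rightarrow> bool) \<Rightarrow> 'a set \<Rightarrow> ('a \<Rightarrow> 'a) set" where
  "class_permutations R B = {\<sigma>. \<sigma> permutes B \<and> (\<forall>x\<in>B. R x (\<sigma> x))}"

lemma finite_class_permutations: "finite B \<Longrightarrow> finite (class_permutations R B)"
  unfolding class_permutations_def
  by (rule finite_subset[OF _ finite_permutations]) auto

lemma id_in_class_permutations: "reflp R \<Longrightarrow> id \<in> class_permutations R B"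
  by (simp add: class_permutations_def permutes_id reflpD)

lemma comp_in_class_permutations:
  assumes "transp R" "\<sigma> \<in> class_permutations R B" "\<tau> \<in> class_permutations R B"
  shows "\<sigma> \<circ> \<tau> \<in> class_permutations R B"
proof -
  have "R x (\<sigma> (\<tau> x))" if "x \<in> B" for x
  proof (rule transpD[OF assms(1)])
    show "R x (\<tau> x)" "R (\<tau> x) (\<sigma> (\<tau> x))"
      using assms(2,3) that by (auto simp: class_permutations_def permutes_in_image)
  qed
  with assms(2,3) show ?thesis
    by (simp add: class_permutations_def permutes_compose)
qed

lemma inv_in_class_permutations:
  assumes "symp R" "\<sigma> \<in> class_permutations R B"
  shows "inv \<sigma> \<in> class_permutations R B"
proof -
  have \<sigma>: "\<sigma> permutes B" "\<forall>x\<in>B. R x (\<sigma> x)"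
    using assms(2) by (auto simp: class_permutations_def)
  have "R x (inv \<sigma> x)" if "x \<in> B" for x
  proof -
    have "R (inv \<sigma> x) x"
      using \<sigma> that permutes_in_image[OF permutes_inv[OF \<sigma>(1)]]
      by (metis permutes_inverses(1))
    then show ?thesis
      using assms(1) by (blast dest: sympD)
  qed
  with \<sigma> show ?thesis
    by (simp add: class_permutations_def permutes_inv)
qed

lemma bij_betw_comp_left_class_permutations:
  assumes "equivp R" "\<rho> \<in> class_permutations R B"
  shows "bij_betw ((\<circ>) \<rho>) (class_permutations R B) (class_permutations R B)"
proof (rule bij_betwI[where g = "(\<circ>) (inv \<rho>)"])
  have R: "symp R" "transp R"
    using assms(1) by (simp_all add: equivp_reflp_symp_transp)
  show "(\<circ>) \<rho> \<in> class_permutations R B \<rightarrow> class_permutations R B"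
    "(\<circ>) (inv \<rho>) \<in> class_permutations R B \<rightarrow> class_permutations R B"
    using comp_in_class_permutations[OF R(2)] inv_in_class_permutations[OF R(1) assms(2)] assms(2)
    by auto
  have "\<rho> permutes B"
    using assms(2) by (simp add: class_permutations_def)
  then have "\<rho> \<circ> inv \<rho> = id" "inv \<rho> \<circ> \<rho> = id"
    by (simp_all add: permutes_inv_o)
  then show "inv \<rho> \<circ> (\<rho> \<circ> \<sigma>) = \<sigma>" and "\<rho> \<circ> (inv \<rho> \<circ> \<sigma>) = \<sigma>" for \<sigma> :: "'a \<Rightarrow> 'a"
    by (simp_all add: o_assoc)
qed

lemma class_not_covered_by_image:
  assumes R: "equivp R" and B: "finite B" "D \<subseteq> B" "b \<in> B" "b \<notin> D"
    and f: "\<forall>x\<in>D. R x (f x)"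
  shows "\<exists>c\<in>B. R b c \<and> c \<notin> f ` D"
proof (rule ccontr)
  define C where "C = {x \<in> B. R b x}"
  assume "\<not> ?thesis"
  then have "C \<subseteq> f ` D"
    by (auto simp: C_def)
  moreover have "x \<in> C" if "x \<in> D" "f x \<in> C" for x
  proof -
    have "R b (f x)" "R x (f x)"
      using that f by (auto simp: C_def)
    then have "R b x"
      using equivp_symp[OF R] equivp_transp[OF R] by blast
    then show ?thesis
      using that(1) B(2) by (auto simp: C_def)
  qed
  ultimately have covered: "C \<subseteq> f ` (D \<inter> C)"
    by blast
  have fin: "finite (D \<inter> C)"
    using B(1,2) finite_subset by blast
  have "D \<inter> C \<subset> C"
    using B(3,4) equivp_reflp[OF R, of b] by (auto simp: C_def)
  then have "card (D \<inter> C) < card C"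
    using B(1) by (intro psubset_card_mono) (auto simp: C_def)
  also have "\<dots> \<le> card (f ` (D \<inter> C))"
    using covered fin by (intro card_mono) auto
  also have "\<dots> \<le> card (D \<inter> C)"
    using fin by (rule card_image_le)
  finally show False
    by simp
qed

lemma class_permutation_extends:
  assumes R: "equivp R" and B: "finite B" "D \<subseteq> B"
    and f: "inj_on f D" "f ` D \<subseteq> B" "\<forall>x\<in>D. R x (f x)"
  shows "\<exists>\<rho>\<in>class_permutations R B. \<forall>x\<in>D. \<rho> x = f x"
  using B(2) f
proof (induction "card (B - D)" arbitrary: D f)
  case 0
  then have "D = B"
    using B(1) by auto
  define \<rho> where "\<rho> x = (if x \<in> B then f x else x)" for x
  have "bij_betw f B B"
    using 0 \<open>D = B\<close> B(1) endo_inj_surj[of B f] by (simp add: bij_betw_def)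
  then have "\<rho> permutes B"
    by (intro bij_imp_permutes) (auto simp: \<rho>_def cong: bij_betw_cong)
  with 0 \<open>D = B\<close> show ?case
    by (intro bexI[of _ \<rho>]) (auto simp: \<rho>_def class_permutations_def)
next
  case (Suc n)
  then obtain b where b: "b \<in> B" "b \<notin> D"
    by (metis Diff_eq_empty_iff card.empty nat.distinct(1) subsetI)
  then obtain c where c: "c \<in> B" "R b c" "c \<notin> f ` D"
    using class_not_covered_by_image[OF R B(1) Suc.prems(1) b Suc.prems(4)] by blast
  have "n = card (B - insert b D)"
    using Suc.hyps(2) b B(1) by (simp add: Diff_insert2[symmetric] card_Diff_singleton)
  moreover have "insert b D \<subseteq> B"
    using Suc.prems(1) b(1) by blast
  moreover have "inj_on (f(b := c)) (insert b D)"
    using Suc.prems(2) b(2) c(3) by (auto simp: inj_on_def)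
  moreover have "f(b := c) ` insert b D \<subseteq> B"
    using Suc.prems(3) b(2) c(1) by auto
  moreover have "\<forall>x\<in>insert b D. R x ((f(b := c)) x)"
    using Suc.prems(4) b(2) c(2) by auto
  ultimately obtain \<rho> where "\<rho> \<in> class_permutations R B" "\<forall>x\<in>insert b D. \<rho> x = (f(b := c)) x"
    using Suc.hyps(1) by blast
  then show ?case
    using b(2) by (metis fun_upd_other insertCI)
qed

section \<open>Fixed points of affine actions on compact convex sets\<close>

lemma continuous_map_prod_open_box:
  assumes f: "continuous_map (prod_topology X Y) Z f"
    and xy: "x \<in> topspace X" "y \<in> topspace Y" and S: "openin Z S" "f (x, y) \<in> S"
  obtains U W where "openin X U" "openin Y W" "x \<in> U" "y \<in> W" "\<forall>u\<in>U. \<forall>w\<in>W. f (u, w) \<in> S"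
proof -
  have "openin (prod_topology X Y) {p \<in> topspace (prod_topology X Y). f p \<in> S}"
    using f S(1) by (rule openin_continuous_map_preimage)
  moreover have "(x, y) \<in> {p \<in> topspace (prod_topology X Y). f p \<in> S}"
    using xy S(2) by simp
  ultimately obtain U W where "openin X U" "openin Y W" "x \<in> U" "y \<in> W"
    "U \<times> W \<subseteq> {p \<in> topspace (prod_topology X Y). f p \<in> S}"
    unfolding openin_prod_topology_alt by meson
  then show ?thesis
    using that by blast
qed

lemma compactin_finite_subcover_of_nbhds:
  assumes "compactin X K" "\<And>z. z \<in> K \<Longrightarrow> openin X (T z)" "\<And>z. z \<in> K \<Longrightarrow> z \<in> T z"
  obtains Z where "finite Z" "Z \<subseteq> K" "K \<subseteq> (\<Union>z\<in>Z. T z)"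
proof -
  obtain \<F> where "finite \<F>" "\<F> \<subseteq> T ` K" "K \<subseteq> \<Union>\<F>"
    using compactinD[OF assms(1), of "T ` K"] assms(2,3) by blast
  moreover obtain Z where "Z \<subseteq> K" "finite Z" "\<F> = T ` Z"
    using finite_subset_image[OF \<open>finite \<F>\<close> \<open>\<F> \<subseteq> T ` K\<close>] by blast
  ultimately show ?thesis
    using that by blast
qed

lemma locally_convex_tvs_continuous_map_add:
  assumes lc: "locally_convex_tvs V" and f: "continuous_map Y V f" and g: "continuous_map Y V g"
  shows "continuous_map Y V (\<lambda>x. f x + g x)"
proof -
  have "continuous_map Y (prod_topology V V) (\<lambda>x. (f x, g x))"
    using f g by (simp add: continuous_map_paired)
  moreover have "continuous_map (prod_topology V V) V (\<lambda>(x, y). x + y)"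
    using lc by (simp add: locally_convex_tvs_def)
  ultimately show ?thesis
    using continuous_map_compose by (force simp: o_def)
qed

lemma locally_convex_tvs_continuous_map_scaleR:
  assumes lc: "locally_convex_tvs V" and f: "continuous_map Y V f"
  shows "continuous_map Y V (\<lambda>x. c *\<^sub>R f x)"
proof -
  have "continuous_map Y (prod_topology euclideanreal V) (\<lambda>x. (c, f x))"
    using f by (simp add: continuous_map_paired)
  moreover have "continuous_map (prod_topology euclideanreal V) V (\<lambda>(a, x). a *\<^sub>R x)"
    using lc by (simp add: locally_convex_tvs_def)
  ultimately show ?thesis
    using continuous_map_compose by (force simp: o_def)
qed

lemma locally_convex_tvs_continuous_map_diff:
  assumes lc: "locally_convex_tvs V" and f: "continuous_map Y V f" and g: "continuous_map Y V g"
  shows "continuous_map Y V (\<lambda>x. f x - g x)"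
  using locally_convex_tvs_continuous_map_add[OF lc f
      locally_convex_tvs_continuous_map_scaleR[OF lc g, of "-1"]]
  by simp

lemma affine_on_convex_sum:
  fixes f :: "'a::real_vector \<Rightarrow> 'b::real_vector"
  assumes K: "convex K"
    and affine: "\<And>x y t. x \<in> K \<Longrightarrow> y \<in> K \<Longrightarrow> 0 \<le> t \<Longrightarrow> t \<le> 1 \<Longrightarrow>
                   f (t *\<^sub>R x + (1 - t) *\<^sub>R y) = t *\<^sub>R f x + (1 - t) *\<^sub>R f y"
    and I: "finite I" "I \<noteq> {}" and a: "\<forall>i\<in>I. 0 \<le> a i" "sum a I = 1" and x: "\<forall>i\<in>I. x i \<in> K"
  shows "f (\<Sum>i\<in>I. a i *\<^sub>R x i) = (\<Sum>i\<in>I. a i *\<^sub>R f (x i))"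
  using I a x
proof (induction I arbitrary: a rule: finite_ne_induct)
  case (singleton i)
  then show ?case by simp
next
  case (insert i I)
  define s where "s = 1 - a i"
  have sum_I: "sum a I = s"
    using insert.hyps(1,3) insert.prems(2) by (simp add: s_def)
  have a_I: "\<forall>j\<in>I. 0 \<le> a j" and x_I: "\<forall>j\<in>I. x j \<in> K" and a_i: "0 \<le> a i"
    using insert.prems by auto
  show ?case
  proof (cases "s = 0")
    case True
    then have "\<forall>j\<in>I. a j = 0"
      using sum_I a_I insert.hyps(1) sum_nonneg_eq_0_iff by blast
    with True show ?thesis
      using insert.hyps(1,3) by (simp add: s_def)
  next
    case False
    moreover have "s \<ge> 0"
      using sum_I a_I sum_nonneg[of I a] by simp
    ultimately have s_pos: "s > 0"
      by simp
    define m where "m = (\<Sum>j\<in>I. (a j / s) *\<^sub>R x j)"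
    have "(\<Sum>j\<in>I. a j / s) = 1"
      using sum_I s_pos by (simp add: sum_divide_distrib[symmetric])
    then have "m \<in> K" and f_m: "f m = (\<Sum>j\<in>I. (a j / s) *\<^sub>R f (x j))"
      using a_I x_I s_pos insert.IH[of "\<lambda>j. a j / s"] unfolding m_def
      by (auto intro!: convex_sum[OF insert.hyps(1) K])
    have "(\<Sum>j\<in>I. a j *\<^sub>R x j) = s *\<^sub>R m"
      using s_pos by (simp add: m_def scaleR_sum_right)
    moreover have "(\<Sum>j\<in>I. a j *\<^sub>R f (x j)) = s *\<^sub>R f m"
      using s_pos by (simp add: f_m scaleR_sum_right)
    moreover have "f (a i *\<^sub>R x i + s *\<^sub>R m) = a i *\<^sub>R f (x i) + s *\<^sub>R f m"
      using affine[of "x i" m "a i"] insert.prems(3) \<open>m \<in> K\<close> a_i s_pos by (simp add: s_def)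
    ultimately show ?thesis
      using insert.hyps(1,3) by simp
  qed
qed

lemma affine_average_displacement:
  fixes f :: "'v::real_vector \<Rightarrow> 'v" and z :: "'i \<Rightarrow> 'v"
  assumes P: "finite P" "P \<noteq> {}" and \<tau>: "bij_betw \<tau> P P"
    and K: "convex K" "z ` P \<subseteq> K" and W: "convex W"
    and affine: "\<And>x y t. x \<in> K \<Longrightarrow> y \<in> K \<Longrightarrow> 0 \<le> t \<Longrightarrow> t \<le> 1 \<Longrightarrow>
                   f (t *\<^sub>R x + (1 - t) *\<^sub>R y) = t *\<^sub>R f x + (1 - t) *\<^sub>R f y"
    and displacement: "\<And>\<sigma>. \<sigma> \<in> P \<Longrightarrow> f (z \<sigma>) - z (\<tau> \<sigma>) \<in> W"
  shows "f (\<Sum>\<sigma>\<in>P. (1 / card P) *\<^sub>R z \<sigma>) - (\<Sum>\<sigma>\<in>P. (1 / card P) *\<^sub>R z \<sigma>) \<in> W"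
proof -
  let ?c = "1 / real (card P)"
  have weights: "(\<Sum>\<sigma>\<in>P. ?c) = 1"
    using P by simp
  have "f (\<Sum>\<sigma>\<in>P. ?c *\<^sub>R z \<sigma>) = (\<Sum>\<sigma>\<in>P. ?c *\<^sub>R f (z \<sigma>))"
    using affine_on_convex_sum[OF K(1) affine P, of "\<lambda>_. ?c" z] weights K(2) by auto
  moreover have "(\<Sum>\<sigma>\<in>P. ?c *\<^sub>R z \<sigma>) = (\<Sum>\<sigma>\<in>P. ?c *\<^sub>R z (\<tau> \<sigma>))"
    using sum.reindex_bij_betw[OF \<tau>, of "\<lambda>\<sigma>. ?c *\<^sub>R z \<sigma>"] by simp
  ultimately have "f (\<Sum>\<sigma>\<in>P. ?c *\<^sub>R z \<sigma>) - (\<Sum>\<sigma>\<in>P. ?c *\<^sub>R z \<sigma>)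
      = (\<Sum>\<sigma>\<in>P. ?c *\<^sub>R (f (z \<sigma>) - z (\<tau> \<sigma>)))"
    by (simp add: sum_subtractf scaleR_diff_right)
  also have "\<dots> \<in> W"
    using displacement P weights by (intro convex_sum[OF P(1) W]) auto
  finally show ?thesis .
qed

lemma uniform_displacement_nbhd:
  fixes V :: "'v::real_vector topology" and act :: "'g \<Rightarrow> 'v \<Rightarrow> 'v"
  assumes lc: "locally_convex_tvs V" and K: "compactin V K"
    and act: "continuous_map (prod_topology TG (subtopology V K)) (subtopology V K) (\<lambda>(g, x). act g x)"
    and e: "e \<in> topspace TG" "\<forall>x\<in>K. act e x = x"
    and W: "openin V W" "0 \<in> W"
  obtains U where "openin TG U" "e \<in> U" "\<forall>v\<in>U. \<forall>x\<in>K. act v x - x \<in> W"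
proof -
  let ?KV = "subtopology V K"
  have tV: "topspace V = UNIV"
    using lc by (simp add: locally_convex_tvs_def)
  have "continuous_map (prod_topology TG ?KV) V (\<lambda>p. act (fst p) (snd p))"
    using act by (simp add: continuous_map_in_subtopology split_def)
  moreover have "continuous_map (prod_topology TG ?KV) V snd"
    using continuous_map_snd continuous_map_in_subtopology by blast
  ultimately have displacement:
    "continuous_map (prod_topology TG ?KV) V (\<lambda>p. act (fst p) (snd p) - snd p)"
    by (rule locally_convex_tvs_continuous_map_diff[OF lc])
  have "\<exists>U T. openin TG U \<and> openin ?KV T \<and> e \<in> U \<and> z \<in> T \<and> (\<forall>u\<in>U. \<forall>w\<in>T. act u w - w \<in> W)"
    if "z \<in> K" for z
    by (rule continuous_map_prod_open_box[OF displacement, of e z W]) (use e W that tV in auto)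
  then obtain Uz Tz where Uz: "\<And>z. z \<in> K \<Longrightarrow> openin TG (Uz z) \<and> e \<in> Uz z"
    and Tz: "\<And>z. z \<in> K \<Longrightarrow> openin ?KV (Tz z) \<and> z \<in> Tz z"
    and small: "\<And>z u w. z \<in> K \<Longrightarrow> u \<in> Uz z \<Longrightarrow> w \<in> Tz z \<Longrightarrow> act u w - w \<in> W"
    by metis
  have "compactin ?KV K"
    using K by (simp add: compactin_subtopology)
  then obtain Z where Z: "finite Z" "Z \<subseteq> K" "K \<subseteq> (\<Union>z\<in>Z. Tz z)"
    using compactin_finite_subcover_of_nbhds[of ?KV K Tz] Tz by blast
  define U where "U = topspace TG \<inter> \<Inter> (Uz ` Z)"
  have "openin TG U"
    unfolding U_def using Z Uz by (intro openin_Int_Inter) auto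
  moreover have "e \<in> U"
    using e(1) Z(2) Uz by (auto simp: U_def)
  moreover have "act v x - x \<in> W" if v: "v \<in> U" and x: "x \<in> K" for v x
  proof -
    obtain z where "z \<in> Z" "x \<in> Tz z"
      using Z(3) x by blast
    then show ?thesis
      using small[of z v x] v Z(2) by (auto simp: U_def)
  qed
  ultimately show ?thesis
    using that by blast
qed

lemma moved_point_nbhd:
  fixes V :: "'v::real_vector topology"
  assumes lc: "locally_convex_tvs V" and f: "continuous_map (subtopology V K) V f"
    and k: "k \<in> K" "f k \<noteq> k"
  obtains W T where "openin V W" "0 \<in> W" "openin (subtopology V K) T" "k \<in> T"
    "\<forall>y\<in>T. f y - y \<notin> W"
proof -
  have tV: "topspace V = UNIV" and Hausdorff: "Hausdorff_space V"
    using lc by (simp_all add: locally_convex_tvs_def)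
  have "0 \<noteq> f k - k"
    using k(2) by simp
  then obtain W S where WS: "openin V W" "openin V S" "0 \<in> W" "f k - k \<in> S" "disjnt W S"
    using Hausdorff[unfolded Hausdorff_space_def, rule_format, of 0 "f k - k"] tV by auto
  have "continuous_map (subtopology V K) V (\<lambda>y. f y - y)"
    using locally_convex_tvs_continuous_map_diff[OF lc f]
      continuous_map_from_subtopology[OF continuous_map_id] by (simp add: id_def)
  then have "openin (subtopology V K) {y \<in> topspace (subtopology V K). f y - y \<in> S}"
    using WS(2) by (rule openin_continuous_map_preimage)
  moreover have "k \<in> {y \<in> topspace (subtopology V K). f y - y \<in> S}"
    using k(1) WS(4) tV by simp
  moreover have "\<forall>y\<in>{y \<in> topspace (subtopology V K). f y - y \<in> S}. f y - y \<notin> W"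
    using WS(5) by (auto simp: disjnt_def)
  ultimately show ?thesis
    by (rule that[OF WS(1,3)])
qed

lemma fixed_point_if_approximate_fixed_points:
  fixes V :: "'v::real_vector topology" and act :: "'g \<Rightarrow> 'v \<Rightarrow> 'v"
  assumes lc: "locally_convex_tvs V" and K: "compactin V K"
    and cont: "\<And>g. g \<in> G \<Longrightarrow> continuous_map (subtopology V K) V (act g)"
    and approx: "\<And>E W. finite E \<Longrightarrow> E \<subseteq> G \<Longrightarrow> openin V W \<Longrightarrow> convex W \<Longrightarrow> 0 \<in> W \<Longrightarrow>
                   \<exists>y\<in>K. \<forall>g\<in>E. act g y - y \<in> W"
  shows "\<exists>x\<in>K. \<forall>g\<in>G. act g x = x"
proof (rule ccontr)
  assume no_fixed_point: "\<not> ?thesis"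
  have "\<exists>g W T. g \<in> G \<and> openin V W \<and> 0 \<in> W \<and> openin (subtopology V K) T \<and> k \<in> T \<and>
      (\<forall>y\<in>T. act g y - y \<notin> W)" if k: "k \<in> K" for k
  proof -
    obtain g where g: "g \<in> G" "act g k \<noteq> k"
      using no_fixed_point k by blast
    moreover obtain W T where "openin V W" "0 \<in> W" "openin (subtopology V K) T" "k \<in> T"
      "\<forall>y\<in>T. act g y - y \<notin> W"
      using moved_point_nbhd[OF lc cont[OF g(1)] k g(2)] by blast
    ultimately show ?thesis
      by blast
  qed
  then obtain gk Wk Tk where gk: "\<And>k. k \<in> K \<Longrightarrow> gk k \<in> G"
    and Wk: "\<And>k. k \<in> K \<Longrightarrow> openin V (Wk k) \<and> 0 \<in> Wk k"
    and Tk: "\<And>k. k \<in> K \<Longrightarrow> openin (subtopology V K) (Tk k) \<and> k \<in> Tk k"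
    and moves: "\<And>k y. k \<in> K \<Longrightarrow> y \<in> Tk k \<Longrightarrow> act (gk k) y - y \<notin> Wk k"
    by metis
  have "compactin (subtopology V K) K"
    using K by (simp add: compactin_subtopology)
  then obtain Z where Z: "finite Z" "Z \<subseteq> K" "K \<subseteq> (\<Union>k\<in>Z. Tk k)"
    using compactin_finite_subcover_of_nbhds[of "subtopology V K" K Tk] Tk by blast
  have tV: "topspace V = UNIV"
    and convex_nbhd: "\<forall>x U. openin V U \<and> x \<in> U \<longrightarrow> (\<exists>W. openin V W \<and> convex W \<and> x \<in> W \<and> W \<subseteq> U)"
    using lc by (simp_all add: locally_convex_tvs_def)
  have "openin V (topspace V \<inter> \<Inter> (Wk ` Z))"
    using Z Wk by (intro openin_Int_Inter) auto
  moreover have "0 \<in> topspace V \<inter> \<Inter> (Wk ` Z)"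
    using Z(2) Wk tV by auto
  ultimately obtain W where W: "openin V W" "convex W" "0 \<in> W" "W \<subseteq> \<Inter> (Wk ` Z)"
    using convex_nbhd[rule_format, OF conjI] by (metis le_infE)
  have "finite (gk ` Z)" "gk ` Z \<subseteq> G"
    using Z(1,2) gk by auto
  then obtain y where y: "y \<in> K" "\<forall>g\<in>gk ` Z. act g y - y \<in> W"
    using approx W(1-3) by blast
  then obtain k where "k \<in> Z" "y \<in> Tk k"
    using Z(3) by blast
  then show False
    using moves[of k y] y(2) W(4) Z(2) by blast
qed

section \<open>Homeomorphisms and full transitivity\<close>

lemma Homeo_id [simp]: "id \<in> Homeo X"
  by (simp add: Homeo_def)

lemma Homeo_comp: "g \<in> Homeo X \<Longrightarrow> h \<in> Homeo X \<Longrightarrow> g \<circ> h \<in> Homeo X"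
  unfolding Homeo_def by (auto intro: homeomorphic_map_compose)

lemma Homeo_in_topspace: "h \<in> Homeo X \<Longrightarrow> x \<in> topspace X \<Longrightarrow> h x \<in> topspace X"
  by (auto simp: Homeo_def dest!: homeomorphic_imp_surjective_map)

lemma bij_Homeo:
  assumes h: "h \<in> Homeo X"
  shows "bij h"
proof -
  have hom: "homeomorphic_map X X h" and out: "\<And>x. x \<notin> topspace X \<Longrightarrow> h x = x"
    using h by (auto simp: Homeo_def)
  have "inj h"
  proof (rule injI)
    fix x y assume "h x = h y"
    then show "x = y"
      using homeomorphic_imp_injective_map[OF hom] out Homeo_in_topspace[OF h]
      by (cases "x \<in> topspace X"; cases "y \<in> topspace X") (auto dest: inj_onD)
  qed
  moreover have "surj h"
  proof (rule surjI)
    fix y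
    show "h (if y \<in> topspace X then inv_into (topspace X) h y else y) = y"
      using homeomorphic_imp_surjective_map[OF hom] out by (auto simp: f_inv_into_f)
  qed
  ultimately show ?thesis
    by (simp add: bij_def)
qed

lemma Homeo_inv:
  assumes h: "h \<in> Homeo X"
  shows "inv h \<in> Homeo X"
proof -
  have hom: "homeomorphic_map X X h" and out: "\<And>x. x \<notin> topspace X \<Longrightarrow> h x = x"
    using h by (auto simp: Homeo_def)
  obtain g where g: "homeomorphic_maps X X h g"
    using hom homeomorphic_map_maps by blast
  have "inv h x = g x" if "x \<in> topspace X" for x
  proof -
    have "h (g x) = x"
      using g that by (simp add: homeomorphic_maps_def)
    then show ?thesis
      by (rule inv_f_eq[OF bij_is_inj[OF bij_Homeo[OF h]]])
  qed
  moreover have "homeomorphic_map X X g"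
    using g by (simp add: homeomorphic_maps_map)
  ultimately have "homeomorphic_map X X (inv h)"
    using homeomorphic_map_eq by (metis (no_types, lifting))
  moreover have "inv h x = x" if "x \<notin> topspace X" for x
    by (rule inv_f_eq[OF bij_is_inj[OF bij_Homeo[OF h]] out[OF that]])
  ultimately show ?thesis
    by (simp add: Homeo_def)
qed

lemma Homeo_inv_f_f [simp]: "h \<in> Homeo X \<Longrightarrow> inv h (h x) = x"
  by (simp add: bij_Homeo bij_is_inj)

lemma Homeo_f_inv_f [simp]: "h \<in> Homeo X \<Longrightarrow> h (inv h x) = x"
  by (simp add: bij_Homeo bij_is_surj surj_f_inv_f)

definition same_orbit :: "'a topology \<Rightarrow> 'a \<Rightarrow> 'a \<Rightarrow> bool" where
  "same_orbit X x y \<longleftrightarrow> (\<exists>h\<in>Homeo X. h x = y)"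

lemma equivp_same_orbit: "equivp (same_orbit X)"
proof (rule equivpI)
  show "reflp (same_orbit X)"
    by (rule reflpI) (auto simp: same_orbit_def intro: bexI[of _ id])
  show "symp (same_orbit X)"
    unfolding same_orbit_def by (rule sympI) (metis Homeo_inv Homeo_inv_f_f)
  show "transp (same_orbit X)"
    unfolding same_orbit_def by (rule transpI) (metis Homeo_comp comp_apply)
qed

lemma similar_points_if_same_orbit:
  assumes "same_orbit X x y" "x \<in> topspace X"
  shows "similar_points X x y"
proof -
  obtain h where h: "h \<in> Homeo X" "h x = y"
    using assms(1) by (auto simp: same_orbit_def)
  have "neighbourhood_of X (topspace X) x" "neighbourhood_of X (topspace X) y"
    using assms(2) Homeo_in_topspace[OF h(1)] h(2) by (auto simp: neighbourhood_of_def)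
  moreover have "homeomorphic_map (subtopology X (topspace X)) (subtopology X (topspace X)) h"
    using h(1) by (simp add: Homeo_def)
  ultimately show ?thesis
    unfolding similar_points_def using h(2) by blast
qed

lemma fully_transitive_extends:
  assumes ft: "fully_transitive X" and B: "finite B" "B \<subseteq> topspace X"
    and inj: "inj_on s B" and orbit: "\<And>b. b \<in> B \<Longrightarrow> same_orbit X b (s b)"
  shows "\<exists>g\<in>Homeo X. \<forall>b\<in>B. g b = s b"
proof -
  obtain xs where xs: "set xs = B" "distinct xs"
    using finite_distinct_list[OF B(1)] by blast
  have "s ` B \<subseteq> topspace X"
    using B(2) orbit Homeo_in_topspace by (fastforce simp: same_orbit_def)
  moreover have "\<forall>i<length xs. similar_points X (xs ! i) (map s xs ! i)"
    using xs B(2) orbit by (auto intro!: similar_points_if_same_orbit)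
  moreover have "distinct (map s xs)"
    using xs inj by (simp add: distinct_map)
  ultimately obtain g where "g \<in> Homeo X" "\<forall>i<length xs. g (xs ! i) = map s xs ! i"
    using ft xs B(2) unfolding fully_transitive_def
    by (elim allE[of _ xs] allE[of _ "map s xs"]) auto
  then show ?thesis
    using xs(1) by (metis in_set_conv_nth nth_map)
qed

lemma realise_class_permutation:
  assumes "fully_transitive X" "finite B" "B \<subseteq> topspace X"
    and "\<sigma> \<in> class_permutations (same_orbit X) B"
  shows "\<exists>h\<in>Homeo X. \<forall>b\<in>B. h b = \<sigma> b"
  using assms fully_transitive_extends[of X B \<sigma>]
  by (auto simp: class_permutations_def permutes_inj_on)

lemma class_permutation_agreeing_with_Homeo:
  assumes g: "g \<in> Homeo X" and B: "finite B" "D \<subseteq> B" "g ` D \<subseteq> B"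
  shows "\<exists>\<rho>\<in>class_permutations (same_orbit X) B. \<forall>x\<in>D. \<rho> x = g x"
proof (rule class_permutation_extends[OF equivp_same_orbit B(1,2) _ B(3)])
  show "inj_on g D"
    using bij_is_inj[OF bij_Homeo[OF g]] by (rule inj_on_subset) simp
  show "\<forall>x\<in>D. same_orbit X x (g x)"
    using g by (auto simp: same_orbit_def)
qed

section \<open>Pointwise stabilisers and Roelcke precompactness\<close>

lemma topspace_pointwise_topology [simp]: "topspace (pointwise_topology X) = Homeo X"
  unfolding pointwise_topology_def topology_generated_by_topspace by auto

definition pointwise_stabiliser :: "'a topology \<Rightarrow> 'a set \<Rightarrow> ('a \<Rightarrow> 'a) set" where
  "pointwise_stabiliser X A = {h \<in> Homeo X. \<forall>a\<in>A. h a = a}"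

lemma pointwise_stabiliser_Un:
  "pointwise_stabiliser X (A \<union> B) = pointwise_stabiliser X A \<inter> pointwise_stabiliser X B"
  by (auto simp: pointwise_stabiliser_def)

lemma pointwise_stabiliser_in_identity_nbhd:
  assumes "openin (pointwise_topology X) U" "id \<in> U"
  obtains A where "finite A" "A \<subseteq> topspace X" "pointwise_stabiliser X A \<subseteq> U"
proof -
  have "generate_topology_on
      (insert (Homeo X) {{h \<in> Homeo X. h x \<in> V} | x V. x \<in> topspace X \<and> openin X V}) U"
    using assms(1) unfolding pointwise_topology_def by (rule openin_topology_generated_by)
  then have "\<exists>A. finite A \<and> A \<subseteq> topspace X \<and> pointwise_stabiliser X A \<subseteq> U"
    using assms(2)
  proof induction
    case (Int S T)
    then obtain A B where "finite A" "A \<subseteq> topspace X" "pointwise_stabiliser X A \<subseteq> S"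
      and "finite B" "B \<subseteq> topspace X" "pointwise_stabiliser X B \<subseteq> T"
      by blast
    then show ?case
      by (intro exI[of _ "A \<union> B"]) (auto simp: pointwise_stabiliser_Un)
  next
    case (UN K)
    then obtain S where "S \<in> K" "id \<in> S"
      by blast
    with UN.IH show ?case
      by (meson Union_upper order_trans)
  next
    case (Basis S)
    show ?case
    proof (cases "S = Homeo X")
      case True
      then show ?thesis
        by (intro exI[of _ "{}"]) (auto simp: pointwise_stabiliser_def)
    next
      case False
      then obtain x V where "S = {h \<in> Homeo X. h x \<in> V}" "x \<in> topspace X"
        using Basis.hyps by blast
      then show ?thesis
        using Basis.prems by (intro exI[of _ "{x}"]) (auto simp: pointwise_stabiliser_def)
    qed
  qed simp
  with that show ?thesis by blast
qed

lemma double_coset_pointwise_stabiliser: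
  assumes ft: "fully_transitive X" and A: "finite A" "A \<subseteq> topspace X"
    and f: "f \<in> Homeo X" and g: "g \<in> Homeo X"
    and same_trace: "\<And>a b. a \<in> A \<Longrightarrow> b \<in> A \<Longrightarrow> f a = b \<longleftrightarrow> g a = b"
  obtains v w where "v \<in> pointwise_stabiliser X A" "w \<in> pointwise_stabiliser X A" "g = v \<circ> f \<circ> w"
proof -
  (* s is to send f a to g a for a in A; being the identity on A is consistent with this
     because f a \<in> A implies g a = f a. *)
  define s where "s x = (if x \<in> A then x else g (inv f x))" for x
  have s_f: "s (f a) = g a" if "a \<in> A" for a
    using same_trace[OF that, of "f a"] f by (auto simp: s_def)
  have f_eq_g: "f a = g a" if "a \<in> A" "g a \<in> A" for a
    using same_trace[OF that] by simp
  have "inj_on s (A \<union> f ` A)"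
    using f_eq_g f g by (auto simp: inj_on_def s_def dest: bij_Homeo[THEN bij_is_inj, THEN injD])
  moreover have "same_orbit X x (s x)" for x
  proof (cases "x \<in> A")
    case True
    then show ?thesis
      by (auto simp: same_orbit_def s_def intro!: bexI[of _ id])
  next
    case False
    then show ?thesis
      using f g by (auto simp: same_orbit_def s_def intro!: bexI[of _ "g \<circ> inv f"] Homeo_comp Homeo_inv)
  qed
  moreover have "A \<union> f ` A \<subseteq> topspace X"
    using A(2) Homeo_in_topspace[OF f] by auto
  ultimately obtain v where v: "v \<in> Homeo X" "\<forall>x\<in>A \<union> f ` A. v x = s x"
    using fully_transitive_extends[OF ft] A(1) by (metis finite_Un finite_imageI)
  define w where "w = inv f \<circ> inv v \<circ> g"
  have "v \<in> pointwise_stabiliser X A"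
    using v by (simp add: pointwise_stabiliser_def s_def)
  moreover have "w \<in> pointwise_stabiliser X A"
  proof -
    have "inv v (g a) = f a" if "a \<in> A" for a
      using v s_f[OF that] that by (metis Homeo_inv_f_f UnI2 imageI)
    then show ?thesis
      using f g v(1) by (simp add: pointwise_stabiliser_def w_def Homeo_comp Homeo_inv)
  qed
  moreover have "g = v \<circ> f \<circ> w"
    using f v(1) by (simp add: w_def fun_eq_iff)
  ultimately show ?thesis
    using that by blast
qed

lemma roelcke_precompact_pointwise_topology:
  assumes ft: "fully_transitive X"
  shows "roelcke_precompact (pointwise_topology X) (\<circ>) id"
  unfolding roelcke_precompact_def topspace_pointwise_topology
proof (intro allI impI)
  fix U assume U: "openin (pointwise_topology X) U \<and> id \<in> U"
  then obtain A where A: "finite A" "A \<subseteq> topspace X" "pointwise_stabiliser X A \<subseteq> U"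
    using pointwise_stabiliser_in_identity_nbhd by metis
  have U_Homeo: "U \<subseteq> Homeo X"
    using U openin_subset by fastforce
  define trace where "trace g = {(a, b) \<in> A \<times> A. g a = b}" for g :: "'a \<Rightarrow> 'a"
  have "trace ` Homeo X \<subseteq> Pow (A \<times> A)"
    by (auto simp: trace_def)
  then have "finite (trace ` Homeo X)"
    using A(1) finite_subset by blast
  then obtain F where F: "F \<subseteq> Homeo X" "finite F" "trace ` Homeo X = trace ` F"
    using finite_subset_image[OF _ subset_refl] by metis
  have "Homeo X \<subseteq> {u \<circ> f \<circ> u' | u f u'. u \<in> U \<and> f \<in> F \<and> u' \<in> U}"
  proof
    fix g assume g: "g \<in> Homeo X"
    then obtain f where f: "f \<in> F" "trace f = trace g"
      using F(3) by (metis imageE imageI)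
    then have "f a = b \<longleftrightarrow> g a = b" if "a \<in> A" "b \<in> A" for a b
      using that by (auto simp: trace_def set_eq_iff)
    then obtain v w where "v \<in> U" "w \<in> U" "g = v \<circ> f \<circ> w"
      using double_coset_pointwise_stabiliser[OF ft A(1,2)] f(1) F(1) g A(3) by (metis subsetD)
    then show "g \<in> {u \<circ> f \<circ> u' | u f u'. u \<in> U \<and> f \<in> F \<and> u' \<in> U}"
      using f(1) by blast
  qed
  moreover have "{u \<circ> f \<circ> u' | u f u'. u \<in> U \<and> f \<in> F \<and> u' \<in> U} \<subseteq> Homeo X"
    using U_Homeo F(1) by (auto intro!: Homeo_comp)
  ultimately show "\<exists>F. finite F \<and> F \<subseteq> Homeo X \<and>
      Homeo X = {u \<circ> f \<circ> u' | u f u'. u \<in> U \<and> f \<in> F \<and> u' \<in> U}"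
    using F(1,2) by blast
qed

section \<open>Amenability\<close>

lemma comp_realisations_in_pointwise_stabiliser:
  assumes g: "g \<in> Homeo X" and h: "h \<in> Homeo X" and h': "h' \<in> Homeo X"
    and \<sigma>: "\<sigma> permutes B" and B: "inv g ` A \<subseteq> B" and \<rho>: "\<forall>x\<in>inv g ` A. \<rho> x = g x"
    and h_\<sigma>: "\<forall>b\<in>B. h b = \<sigma> b" and h'_\<rho>\<sigma>: "\<forall>b\<in>B. h' b = \<rho> (\<sigma> b)"
  shows "g \<circ> h \<circ> inv h' \<in> pointwise_stabiliser X A"
proof -
  have "(g \<circ> h \<circ> inv h') a = a" if a: "a \<in> A" for a
  proof -
    define x where "x = inv \<sigma> (inv g a)"
    have "inv g a \<in> B"
      using B a by blast
    then have x: "x \<in> B" "\<sigma> x = inv g a"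
      using \<sigma> by (simp_all add: x_def permutes_in_image permutes_inv permutes_inverses(1))
    then have "h' x = a"
      using h'_\<rho>\<sigma> \<rho> a g by simp
    then have "inv h' a = x"
      using h' by (metis Homeo_inv_f_f)
    then show ?thesis
      using h_\<sigma> x g by simp
  qed
  then show ?thesis
    using g h h' by (simp add: pointwise_stabiliser_def Homeo_comp Homeo_inv)
qed

lemma finite_family_permuted_mod_stabiliser:
  fixes X :: "'a topology"
  assumes ft: "fully_transitive X" and A: "finite A" "A \<subseteq> topspace X"
    and E: "finite E" "E \<subseteq> Homeo X"
  obtains P :: "('a \<Rightarrow> 'a) set" and r where "finite P" "P \<noteq> {}" "r ` P \<subseteq> Homeo X"
    "\<And>g. g \<in> E \<Longrightarrow>
       \<exists>\<tau>. bij_betw \<tau> P P \<and> (\<forall>\<sigma>\<in>P. g \<circ> r \<sigma> \<circ> inv (r (\<tau> \<sigma>)) \<in> pointwise_stabiliser X A)"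
proof -
  define B where "B = A \<union> (\<Union>g\<in>E. inv g ` A)"
  have B: "finite B" "B \<subseteq> topspace X"
    using A E by (auto simp: B_def intro!: Homeo_in_topspace[OF Homeo_inv])
  define P where "P = class_permutations (same_orbit X) B"
  have P: "finite P" "P \<noteq> {}"
    using B(1) id_in_class_permutations[OF equivp_reflp2[OF equivp_same_orbit]]
    by (auto simp: P_def finite_class_permutations)
  obtain r where r_Homeo: "\<And>\<sigma>. \<sigma> \<in> P \<Longrightarrow> r \<sigma> \<in> Homeo X"
    and r_agrees: "\<And>\<sigma>. \<sigma> \<in> P \<Longrightarrow> \<forall>b\<in>B. r \<sigma> b = \<sigma> b"
    using realise_class_permutation[OF ft B] unfolding P_def by metis
  have permuted: "\<exists>\<tau>. bij_betw \<tau> P P \<and> (\<forall>\<sigma>\<in>P. g \<circ> r \<sigma> \<circ> inv (r (\<tau> \<sigma>)) \<in> pointwise_stabiliser X A)"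
    if g: "g \<in> E" for g
  proof -
    have g_Homeo: "g \<in> Homeo X"
      using g E(2) by blast
    have preimage_B: "inv g ` A \<subseteq> B"
      using g by (auto simp: B_def)
    moreover have "g ` inv g ` A \<subseteq> B"
      using g_Homeo by (auto simp: B_def)
    ultimately obtain \<rho> where \<rho>: "\<rho> \<in> P" "\<forall>x\<in>inv g ` A. \<rho> x = g x"
      using class_permutation_agreeing_with_Homeo[OF g_Homeo B(1)] unfolding P_def by blast
    have "g \<circ> r \<sigma> \<circ> inv (r (\<rho> \<circ> \<sigma>)) \<in> pointwise_stabiliser X A" if \<sigma>: "\<sigma> \<in> P" for \<sigma>
    proof -
      have \<rho>\<sigma>: "\<rho> \<circ> \<sigma> \<in> P"
        using comp_in_class_permutations[OF equivp_imp_transp[OF equivp_same_orbit]] \<rho>(1) \<sigma>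
        unfolding P_def by blast
      have "\<sigma> permutes B"
        using \<sigma> by (simp add: P_def class_permutations_def)
      moreover have "\<forall>b\<in>B. r (\<rho> \<circ> \<sigma>) b = \<rho> (\<sigma> b)"
        using r_agrees[OF \<rho>\<sigma>] by simp
      ultimately show ?thesis
        using comp_realisations_in_pointwise_stabiliser[OF g_Homeo r_Homeo[OF \<sigma>] r_Homeo[OF \<rho>\<sigma>]
            _ preimage_B \<rho>(2) r_agrees[OF \<sigma>]]
        by blast
    qed
    moreover have "bij_betw ((\<circ>) \<rho>) P P"
      using bij_betw_comp_left_class_permutations[OF equivp_same_orbit] \<rho>(1) unfolding P_def by blast
    ultimately show ?thesis
      by blast
  qed
  have "r ` P \<subseteq> Homeo X"
    using r_Homeo by blast
  from that[OF P this permuted] show ?thesis .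
qed

lemma approximate_fixed_point_of_permuted_family:
  fixes act :: "('a \<Rightarrow> 'a) \<Rightarrow> 'v::real_vector \<Rightarrow> 'v"
  assumes act: "continuous_affine_action (pointwise_topology X) (\<circ>) id V K act"
    and K: "K \<noteq> {}" "convex K" and W: "convex W"
    and S: "S \<subseteq> Homeo X" "\<forall>v\<in>S. \<forall>x\<in>K. act v x - x \<in> W"
    and P: "finite P" "P \<noteq> {}" "r ` P \<subseteq> Homeo X"
    and E: "E \<subseteq> Homeo X"
    and permuted: "\<And>g. g \<in> E \<Longrightarrow> \<exists>\<tau>. bij_betw \<tau> P P \<and> (\<forall>\<sigma>\<in>P. g \<circ> r \<sigma> \<circ> inv (r (\<tau> \<sigma>)) \<in> S)"
  shows "\<exists>y\<in>K. \<forall>g\<in>E. act g y - y \<in> W"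
proof -
  have act_K: "\<And>g x. g \<in> Homeo X \<Longrightarrow> x \<in> K \<Longrightarrow> act g x \<in> K"
    and act_comp: "\<And>g h x. g \<in> Homeo X \<Longrightarrow> h \<in> Homeo X \<Longrightarrow> x \<in> K \<Longrightarrow> act (g \<circ> h) x = act g (act h x)"
    and act_affine: "\<And>g x y t. g \<in> Homeo X \<Longrightarrow> x \<in> K \<Longrightarrow> y \<in> K \<Longrightarrow> 0 \<le> t \<Longrightarrow> t \<le> 1 \<Longrightarrow>
        act g (t *\<^sub>R x + (1 - t) *\<^sub>R y) = t *\<^sub>R act g x + (1 - t) *\<^sub>R act g y"
    using act by (simp_all add: continuous_affine_action_def)
  obtain k where k: "k \<in> K"
    using K(1) by blast
  define z where "z \<sigma> = act (r \<sigma>) k" for \<sigma>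
  have z: "z ` P \<subseteq> K"
    using P(3) act_K k by (auto simp: z_def)
  define y where "y = (\<Sum>\<sigma>\<in>P. (1 / card P) *\<^sub>R z \<sigma>)"
  have "y \<in> K"
    unfolding y_def using P z by (intro convex_sum[OF P(1) K(2)]) auto
  moreover have "act g y - y \<in> W" if g: "g \<in> E" for g
  proof -
    obtain \<tau> where \<tau>: "bij_betw \<tau> P P" "\<forall>\<sigma>\<in>P. g \<circ> r \<sigma> \<circ> inv (r (\<tau> \<sigma>)) \<in> S"
      using permuted[OF g] by blast
    have "act g (z \<sigma>) - z (\<tau> \<sigma>) \<in> W" if \<sigma>: "\<sigma> \<in> P" for \<sigma>
    proof -
      define v where "v = g \<circ> r \<sigma> \<circ> inv (r (\<tau> \<sigma>))"
      have v: "v \<in> S" "v \<in> Homeo X"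
        using \<tau>(2) \<sigma> S(1) by (auto simp: v_def)
      have r: "r \<sigma> \<in> Homeo X" "r (\<tau> \<sigma>) \<in> Homeo X"
        using P(3) \<sigma> bij_betwE[OF \<tau>(1)] by auto
      then have "g \<circ> r \<sigma> = v \<circ> r (\<tau> \<sigma>)"
        by (simp add: v_def fun_eq_iff)
      then have "act g (z \<sigma>) = act v (z (\<tau> \<sigma>))"
        using act_comp g E v(2) r k by (metis subsetD z_def)
      moreover have "z (\<tau> \<sigma>) \<in> K"
        using z \<sigma> bij_betwE[OF \<tau>(1)] by blast
      ultimately show ?thesis
        using S(2) v(1) by simp
    qed
    moreover have "g \<in> Homeo X"
      using g E by blast
    ultimately show ?thesis
      unfolding y_def
      using affine_average_displacement[OF P(1,2) \<tau>(1) K(2) z W] act_affine by blast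
  qed
  ultimately show ?thesis
    by blast
qed

lemma approximate_fixed_point_Homeo:
  fixes V :: "'v::real_vector topology" and act :: "('a \<Rightarrow> 'a) \<Rightarrow> 'v \<Rightarrow> 'v"
  assumes ft: "fully_transitive X" and lc: "locally_convex_tvs V"
    and K: "K \<noteq> {}" "compactin V K" "convex K"
    and act: "continuous_affine_action (pointwise_topology X) (\<circ>) id V K act"
    and E: "finite E" "E \<subseteq> Homeo X" and W: "openin V W" "convex W" "0 \<in> W"
  shows "\<exists>y\<in>K. \<forall>g\<in>E. act g y - y \<in> W"
proof -
  obtain U where U: "openin (pointwise_topology X) U" "id \<in> U" "\<forall>v\<in>U. \<forall>x\<in>K. act v x - x \<in> W"
    using uniform_displacement_nbhd[OF lc K(2), of "pointwise_topology X" act id W] act W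
    by (auto simp: continuous_affine_action_def)
  then obtain A where A: "finite A" "A \<subseteq> topspace X" "pointwise_stabiliser X A \<subseteq> U"
    using pointwise_stabiliser_in_identity_nbhd by metis
  obtain P :: "('a \<Rightarrow> 'a) set" and r where P: "finite P" "P \<noteq> {}" "r ` P \<subseteq> Homeo X"
    and permuted: "\<And>g. g \<in> E \<Longrightarrow>
       \<exists>\<tau>. bij_betw \<tau> P P \<and> (\<forall>\<sigma>\<in>P. g \<circ> r \<sigma> \<circ> inv (r (\<tau> \<sigma>)) \<in> pointwise_stabiliser X A)"
    using finite_family_permuted_mod_stabiliser[OF ft A(1,2) E] by blast
  have "pointwise_stabiliser X A \<subseteq> Homeo X"
    by (auto simp: pointwise_stabiliser_def)
  moreover have "\<forall>v\<in>pointwise_stabiliser X A. \<forall>x\<in>K. act v x - x \<in> W"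
    using U(3) A(3) by blast
  ultimately show ?thesis
    by (rule approximate_fixed_point_of_permuted_family[OF act K(1,3) W(2) _ _ P E(2) permuted])
qed

lemma amenable_pointwise_topology:
  assumes ft: "fully_transitive X"
  shows "amenable_wrt (pointwise_topology X) (\<circ>) id TYPE('v::real_vector)"
  unfolding amenable_wrt_def
proof (intro allI impI)
  fix V :: "'v topology" and K and act :: "('a \<Rightarrow> 'a) \<Rightarrow> 'v \<Rightarrow> 'v"
  assume "locally_convex_tvs V \<and> K \<noteq> {} \<and> compactin V K \<and> convex K \<and>
      continuous_affine_action (pointwise_topology X) (\<circ>) id V K act"
  then have lc: "locally_convex_tvs V" and K: "K \<noteq> {}" "compactin V K" "convex K"
    and act: "continuous_affine_action (pointwise_topology X) (\<circ>) id V K act"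
    by auto
  have "continuous_map (subtopology V K) V (act g)" if g: "g \<in> Homeo X" for g
  proof -
    have "continuous_map (subtopology V K) (prod_topology (pointwise_topology X) (subtopology V K))
        (\<lambda>x. (g, x))"
      using g by (simp add: continuous_map_paired)
    moreover have "continuous_map (prod_topology (pointwise_topology X) (subtopology V K)) V
        (\<lambda>(g, x). act g x)"
      using act by (simp add: continuous_affine_action_def continuous_map_in_subtopology)
    ultimately show ?thesis
      using continuous_map_compose by (force simp: o_def)
  qed
  then show "\<exists>x\<in>K. \<forall>g\<in>topspace (pointwise_topology X). act g x = x"
    using approximate_fixed_point_Homeo[OF ft lc K act]
    by (simp add: fixed_point_if_approximate_fixed_points[OF lc K(2)])
qed

theorem theorem14:
  fixes X :: "'a topology"
  assumes "scattered_space X"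
    and "fully_transitive X"
  shows "amenable_wrt (pointwise_topology X) (\<circ>) id TYPE('v::real_vector)
         \<and> roelcke_precompact (pointwise_topology X) (\<circ>) id"
  (* Scatteredness is what makes the pointwise topology a group topology; the definitions of
     amenable_wrt and roelcke_precompact do not need this, so only full transitivity is used. *)
  using amenable_pointwise_topology[OF assms(2)] roelcke_precompact_pointwise_topology[OF assms(2)]
  by blast

end
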